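(* Let $S\subseteq\mathbb{R}^d$ be a set and $K>0$ such that $\frac{\|p_1-p_2\|}{\|q_1-q_2\|}\le K$ for all $p_1,p_2,q_1,q_2\in S$ with $q_1\ne q_2$. If $S$ is $(p,j,\alpha)$-flat for some $p\in S$, then $S$ is $(q,j,20(K\alpha)^{1/2})$-flat for every $q\in S$.
   Context: A $j$-plane is an affine subspace of dimension $j$. The angle between a vector $v$ and a plane $\Lambda$ is the infimum of the angles between $v$ and vectors $w\in\Lambda-\Lambda$. A set $S$ is $(p,j,\alpha)$-flat (for $p\in S$) if there exists a $j$-plane $\Lambda_p$ such that every vector $p-q$, $q\in S$, makes angle at most $\alpha$ with $\Lambda_p$. *)

theory Defs
  imports "HOL-Analysis.Analysis"
begin

definition vec_angle :: "'a::euclidean_space \<Rightarrow> 'a \<Rightarrow> real" where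
  "vec_angle v w = (if v = 0 \<or> w = 0 then pi / 2
                    else arccos ((v \<bullet> w) / (norm v * norm w)))"

definition is_jplane :: "nat \<Rightarrow> 'a::euclidean_space set \<Rightarrow> bool" where
  "is_jplane j L \<longleftrightarrow> affine L \<and> aff_dim L = int j"

definition plane_angle :: "'a::euclidean_space \<Rightarrow> 'a set \<Rightarrow> real" where
  "plane_angle v L = (if v = 0 then 0
     else (INF w \<in> {x - y | x y. x \<in> L \<and> y \<in> L}. vec_angle v w))"

definition flat_at :: "'a::euclidean_space set \<Rightarrow> 'a \<Rightarrow> nat \<Rightarrow> real \<Rightarrow> bool" where
  "flat_at S p j \<alpha> \<longleftrightarrow>
     (\<exists>L. is_jplane j L \<and> (\<forall>q\<in>S. plane_angle (p - q) L \<le> \<alpha>))"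

end

theory Submission
  imports Defs
begin

text \<open>Split a vector \<open>v = y + z\<close> with \<open>y\<close> in the direction space of the plane \<open>L\<close> and \<open>z\<close>
  orthogonal to it. The angle \<open>\<theta>\<close> between \<open>v\<close> and \<open>L\<close> is attained at \<open>y\<close>, so
  \<open>|z| = sin \<theta> |v|\<close>. Flatness at \<open>p\<close> thus makes the orthogonal parts of \<open>p - q\<close> and
  \<open>p - r\<close> at most \<open>\<alpha> K |q - r|\<close>, and as \<open>q - r = (p - r) - (p - q)\<close>, the orthogonal part of
  \<open>q - r\<close> is at most \<open>2 K \<alpha> |q - r| \<le> sin (20 sqrt (K \<alpha>)) |q - r|\<close>. When
  \<open>20 sqrt (K \<alpha>) \<ge> \<pi>/2\<close> there is nothing to prove, since no angle with a plane exceeds \<open>\<pi>/2\<close>.\<close>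

definition directions :: "'a::real_vector set \<Rightarrow> 'a set" where
  "directions L = {x - y | x y. x \<in> L \<and> y \<in> L}"

lemma plane_angle_directions:
  "plane_angle v L = (if v = 0 then 0 else INF w \<in> directions L. vec_angle v w)"
  by (simp add: plane_angle_def directions_def)

lemma directions_eq_translation:
  assumes "affine L" "a \<in> L"
  shows "directions L = (\<lambda>x. x - a) ` L"
proof
  show "directions L \<subseteq> (\<lambda>x. x - a) ` L"
  proof
    fix u assume "u \<in> directions L"
    then obtain x y where xy: "x \<in> L" "y \<in> L" "u = x - y"
      by (auto simp: directions_def)
    have "a + 1 *\<^sub>R (x - y) \<in> L"
      using mem_affine_3_minus[OF assms xy(1,2)] .
    then show "u \<in> (\<lambda>x. x - a) ` L"
      by (rule rev_image_eqI) (simp add: xy(3))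
  qed
  show "(\<lambda>x. x - a) ` L \<subseteq> directions L"
    using assms(2) by (auto simp: directions_def)
qed

lemma subspace_directions:
  assumes "affine L" "L \<noteq> {}"
  shows "subspace (directions L)"
  using assms directions_eq_translation affine_diffs_subspace_subtract by fastforce

lemma subspace_orthogonal_decomposition:
  fixes v :: "'a::euclidean_space"
  assumes "subspace D"
  obtains y z where "y \<in> D" "\<And>w. w \<in> D \<Longrightarrow> orthogonal z w" "v = y + z"
  using orthogonal_subspace_decomp_exists[of D v] assms by (metis span_eq_iff)

lemma abs_inner_div_norms_le_1:
  fixes v w :: "'a::real_inner"
  shows "\<bar>(v \<bullet> w) / (norm v * norm w)\<bar> \<le> 1"
proof (cases "v = 0 \<or> w = 0")
  case False
  then show ?thesis
    using Cauchy_Schwarz_ineq2[of v w] by (simp add: abs_div divide_le_eq_1)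
qed auto

lemma vec_angle_nonneg: "0 \<le> vec_angle v w"
  using abs_inner_div_norms_le_1[of v w] unfolding vec_angle_def abs_le_iff
  by (auto intro!: arccos_lbound)

lemma plane_angle_nonneg:
  assumes "L \<noteq> {}"
  shows "0 \<le> plane_angle v L"
proof -
  have "directions L \<noteq> {}"
    using assms by (auto simp: directions_def)
  then show ?thesis
    using vec_angle_nonneg by (auto simp: plane_angle_directions intro!: cINF_greatest)
qed

lemma plane_angle_le_pi2:
  assumes "L \<noteq> {}"
  shows "plane_angle v L \<le> pi / 2"
proof (cases "v = 0")
  case False
  from assms obtain a where "a \<in> L" by blast
  then have "0 \<in> directions L"
    by (force simp: directions_def)
  moreover have "bdd_below ((\<lambda>w. vec_angle v w) ` directions L)"
    using vec_angle_nonneg by (intro bdd_belowI[where m = 0]) auto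
  ultimately show ?thesis
    using False cINF_lower[of "\<lambda>w. vec_angle v w" "directions L" 0]
    by (simp add: plane_angle_directions vec_angle_def)
qed (simp add: plane_angle_def)

lemma norm_le_norm_add_orthogonal:
  fixes y z :: "'a::real_inner"
  assumes "orthogonal z y"
  shows "norm y \<le> norm (y + z)"
proof (rule power2_le_imp_le)
  show "(norm y)\<^sup>2 \<le> (norm (y + z))\<^sup>2"
    using norm_add_Pythagorean[of y z] assms by (simp add: orthogonal_commute)
qed simp

lemma arccos_le_vec_angle_orthogonal:
  fixes y z w :: "'a::euclidean_space"
  assumes "orthogonal z y" "orthogonal z w" "y + z \<noteq> 0"
  shows "arccos (norm y / norm (y + z)) \<le> vec_angle (y + z) w"
proof -
  let ?v = "y + z"
  have ratio: "0 \<le> norm y / norm ?v" "norm y / norm ?v \<le> 1"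
    using norm_le_norm_add_orthogonal[OF assms(1)] assms(3) by auto
  show ?thesis
  proof (cases "w = 0")
    case True
    then show ?thesis
      using arccos_le_pi2[OF ratio] by (simp add: vec_angle_def)
  next
    case False
    have "?v \<bullet> w = y \<bullet> w"
      using assms(2) by (simp add: inner_add_left orthogonal_def)
    also have "\<dots> \<le> norm y * norm w"
      by (rule norm_cauchy_schwarz)
    finally have "(?v \<bullet> w) / (norm ?v * norm w) \<le> norm y / norm ?v"
      using False assms(3) by (simp add: field_simps)
    moreover have "-1 \<le> (?v \<bullet> w) / (norm ?v * norm w)"
      using abs_inner_div_norms_le_1[of ?v w] by linarith
    ultimately show ?thesis
      using False assms(3) ratio by (simp add: vec_angle_def arccos_le_arccos)
  qed
qed

lemma vec_angle_orthogonal_part: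
  fixes y z :: "'a::euclidean_space"
  assumes "orthogonal z y" "y + z \<noteq> 0"
  shows "vec_angle (y + z) y = arccos (norm y / norm (y + z))"
proof (cases "y = 0")
  case False
  have "(y + z) \<bullet> y = (norm y)\<^sup>2"
    using assms(1) by (simp add: inner_add_left orthogonal_def power2_norm_eq_inner)
  then show ?thesis
    using False assms(2) by (simp add: vec_angle_def power2_eq_square)
qed (simp add: vec_angle_def)

lemma plane_angle_eq_arccos:
  fixes y z :: "'a::euclidean_space"
  assumes y: "y \<in> directions L" and z: "\<And>w. w \<in> directions L \<Longrightarrow> orthogonal z w"
    and "y + z \<noteq> 0"
  shows "plane_angle (y + z) L = arccos (norm y / norm (y + z))"
proof -
  let ?A = "(\<lambda>w. vec_angle (y + z) w) ` directions L"
  have "bdd_below ?A"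
    using vec_angle_nonneg by (intro bdd_belowI[where m = 0]) auto
  then have "Inf ?A \<le> vec_angle (y + z) y"
    using y by (rule cINF_lower)
  then have "Inf ?A \<le> arccos (norm y / norm (y + z))"
    using vec_angle_orthogonal_part[OF z[OF y] assms(3)] by simp
  moreover have "arccos (norm y / norm (y + z)) \<le> Inf ?A"
    using y z arccos_le_vec_angle_orthogonal[OF z[OF y] _ assms(3)]
    by (auto intro!: cINF_greatest)
  ultimately show ?thesis
    using assms(3) by (simp add: plane_angle_directions)
qed

lemma norm_orthogonal_part:
  fixes y z :: "'a::euclidean_space"
  assumes y: "y \<in> directions L" and z: "\<And>w. w \<in> directions L \<Longrightarrow> orthogonal z w"
  shows "norm z = sin (plane_angle (y + z) L) * norm (y + z)"
proof (cases "y + z = 0")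
  case True
  then have "y = - z"
    by (simp add: eq_neg_iff_add_eq_0)
  then have "orthogonal z (- z)"
    using z[OF y] by simp
  then have "z = 0"
    by (simp add: orthogonal_def)
  then show ?thesis
    using True by simp
next
  case False
  let ?r = "norm y / norm (y + z)"
  have "-1 \<le> ?r" "?r \<le> 1"
    using norm_le_norm_add_orthogonal[OF z[OF y]] False by (auto intro: order_trans[of _ 0])
  then have "sin (arccos ?r) * norm (y + z) = sqrt (1 - ?r\<^sup>2) * sqrt ((norm (y + z))\<^sup>2)"
    by (simp add: sin_arccos)
  also have "\<dots> = sqrt ((1 - ?r\<^sup>2) * (norm (y + z))\<^sup>2)"
    by (simp only: real_sqrt_mult)
  also have "(1 - ?r\<^sup>2) * (norm (y + z))\<^sup>2 = (norm (y + z))\<^sup>2 - (norm y)\<^sup>2"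
    using False by (simp add: field_simps)
  also have "\<dots> = (norm z)\<^sup>2"
    using norm_add_Pythagorean[of y z] z[OF y] by (simp add: orthogonal_commute)
  finally show ?thesis
    using plane_angle_eq_arccos[OF y z False] by simp
qed

lemma norm_orthogonal_part_le:
  fixes y z :: "'a::euclidean_space"
  assumes y: "y \<in> directions L" and z: "\<And>w. w \<in> directions L \<Longrightarrow> orthogonal z w"
    and "plane_angle (y + z) L \<le> \<alpha>"
  shows "norm z \<le> \<alpha> * norm (y + z)"
proof -
  let ?\<theta> = "plane_angle (y + z) L"
  have "L \<noteq> {}"
    using y by (auto simp: directions_def)
  then have "sin ?\<theta> \<le> \<alpha>"
    using sin_x_le_x[OF plane_angle_nonneg] assms(3) by (meson order_trans)
  then show ?thesis
    using norm_orthogonal_part[OF y z] by (simp add: mult_right_mono)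
qed

lemma plane_angle_le_if_norm_orthogonal_part_le:
  fixes y z :: "'a::euclidean_space"
  assumes y: "y \<in> directions L" and z: "\<And>w. w \<in> directions L \<Longrightarrow> orthogonal z w"
    and \<beta>: "0 \<le> \<beta>" "\<beta> \<le> pi / 2" and "norm z \<le> sin \<beta> * norm (y + z)"
  shows "plane_angle (y + z) L \<le> \<beta>"
proof (cases "y + z = 0")
  case False
  let ?\<theta> = "plane_angle (y + z) L"
  have "L \<noteq> {}"
    using y by (auto simp: directions_def)
  then have \<theta>: "0 \<le> ?\<theta>" "?\<theta> \<le> pi / 2"
    by (rule plane_angle_nonneg, rule plane_angle_le_pi2)
  have "sin ?\<theta> * norm (y + z) \<le> sin \<beta> * norm (y + z)"
    using assms(5) norm_orthogonal_part[OF y z] by simp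
  then have "sin ?\<theta> \<le> sin \<beta>"
    using False by simp
  then show ?thesis
    using \<theta> \<beta> by (simp add: sin_mono_le_eq)
qed (use \<beta> in \<open>simp add: plane_angle_def\<close>)

lemma plane_angle_diff_le:
  fixes p q r :: "'a::euclidean_space"
  assumes L: "affine L" "L \<noteq> {}"
    and q: "plane_angle (p - q) L \<le> \<alpha>" "norm (p - q) \<le> R"
    and r: "plane_angle (p - r) L \<le> \<alpha>" "norm (p - r) \<le> R"
    and "0 \<le> \<alpha>" "0 \<le> \<beta>" "\<beta> \<le> pi / 2" "2 * \<alpha> * R \<le> sin \<beta> * norm (q - r)"
  shows "plane_angle (q - r) L \<le> \<beta>"
proof -
  have D: "subspace (directions L)"
    using subspace_directions[OF L] .
  obtain y1 z1 where y1: "y1 \<in> directions L" and z1: "\<And>w. w \<in> directions L \<Longrightarrow> orthogonal z1 w"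
    and pr: "p - r = y1 + z1"
    using subspace_orthogonal_decomposition[OF D, where v = "p - r"] by blast
  obtain y2 z2 where y2: "y2 \<in> directions L" and z2: "\<And>w. w \<in> directions L \<Longrightarrow> orthogonal z2 w"
    and pq: "p - q = y2 + z2"
    using subspace_orthogonal_decomposition[OF D, where v = "p - q"] by blast
  have "q - r = (y1 - y2) + (z1 - z2)"
    using pr pq by (simp add: algebra_simps)
  moreover have "y1 - y2 \<in> directions L"
    using subspace_diff[OF D y1 y2] .
  moreover have "orthogonal (z1 - z2) w" if "w \<in> directions L" for w
    using z1[OF that] z2[OF that] by (simp add: orthogonal_def inner_diff_left)
  moreover have "norm (z1 - z2) \<le> sin \<beta> * norm (q - r)"
  proof -
    have "norm (z1 - z2) \<le> norm z1 + norm z2"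
      by (rule norm_triangle_ineq4)
    also have "\<dots> \<le> \<alpha> * norm (p - r) + \<alpha> * norm (p - q)"
      using norm_orthogonal_part_le[OF y1 z1] norm_orthogonal_part_le[OF y2 z2] q r pr pq
      by (intro add_mono) auto
    also have "\<dots> \<le> \<alpha> * R + \<alpha> * R"
      using q(2) r(2) \<open>0 \<le> \<alpha>\<close> by (intro add_mono mult_left_mono)
    also have "\<dots> \<le> sin \<beta> * norm (q - r)"
      using assms(10) by (simp add: algebra_simps)
    finally show ?thesis .
  qed
  ultimately show ?thesis
    using plane_angle_le_if_norm_orthogonal_part_le[of "y1 - y2" L "z1 - z2" \<beta>] assms(8,9)
    by simp
qed

lemma sin_ge_cubic:
  fixes x :: real
  assumes "0 \<le> x"
  shows "x - x ^ 3 / 6 \<le> sin x"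
proof -
  have "\<bar>sin x - (\<Sum>m<3. sin_coeff m * x ^ m)\<bar> \<le> inverse (fact 3) * \<bar>x\<bar> ^ 3"
    by (rule Maclaurin_sin_bound)
  moreover have "(\<Sum>m<3. sin_coeff m * x ^ m) = x"
    by (simp add: sin_coeff_def numeral_3_eq_3 lessThan_Suc)
  ultimately have "\<bar>sin x - x\<bar> \<le> x ^ 3 / 6"
    using assms by (simp add: fact_numeral)
  then show ?thesis
    unfolding abs_le_iff by linarith
qed

lemma square_le_sin_20:
  fixes s :: real
  assumes "0 \<le> s" "20 * s \<le> pi / 2"
  shows "2 * s\<^sup>2 \<le> sin (20 * s)"
proof -
  let ?x = "20 * s"
  have "?x \<le> 2"
    using assms(2) pi_less_4 by linarith
  then have "?x\<^sup>2 \<le> 2\<^sup>2"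
    using assms(1) by (intro power_mono) auto
  then have "?x * ?x\<^sup>2 \<le> ?x * 4"
    using assms(1) by (intro mult_left_mono) auto
  then have "?x / 3 \<le> sin ?x"
    using sin_ge_cubic[of ?x] assms(1) by (simp add: power3_eq_cube power2_eq_square)
  moreover have "2 * s * s \<le> 2 * s * (10 / 3)"
    using \<open>?x \<le> 2\<close> assms(1) by (intro mult_left_mono) auto
  ultimately show ?thesis
    by (simp add: power2_eq_square)
qed

theorem lemma7:
  fixes S :: "'a::euclidean_space set" and K \<alpha> :: real and p :: 'a and j :: nat
  assumes "K > 0"
    and "\<And>p1 p2 q1 q2. p1 \<in> S \<Longrightarrow> p2 \<in> S \<Longrightarrow> q1 \<in> S \<Longrightarrow> q2 \<in> S \<Longrightarrow> q1 \<noteq> q2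
           \<Longrightarrow> norm (p1 - p2) / norm (q1 - q2) \<le> K"
    and "p \<in> S"
    and "flat_at S p j \<alpha>"
  shows "\<forall>q\<in>S. flat_at S q j (20 * sqrt (K * \<alpha>))"
proof
  fix q assume q: "q \<in> S"
  obtain L where L: "is_jplane j L" and flat: "\<And>r. r \<in> S \<Longrightarrow> plane_angle (p - r) L \<le> \<alpha>"
    using assms(4) by (auto simp: flat_at_def)
  have "affine L" "L \<noteq> {}"
    using L by (auto simp: is_jplane_def)
  have "0 \<le> \<alpha>"
    using flat[OF assms(3)] by (simp add: plane_angle_def)
  define s where "s = sqrt (K * \<alpha>)"
  have "0 \<le> s" "s\<^sup>2 = K * \<alpha>"
    using assms(1) \<open>0 \<le> \<alpha>\<close> by (simp_all add: s_def)
  have "plane_angle (q - r) L \<le> 20 * s" if r: "r \<in> S" for r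
  proof (cases "20 * s \<le> pi / 2 \<and> q \<noteq> r")
    case True
    have ratio: "norm (p - a) \<le> K * norm (q - r)" if "a \<in> S" for a
      using assms(2)[OF assms(3) that q r] True by (simp add: divide_le_eq)
    have "2 * \<alpha> * (K * norm (q - r)) = 2 * s\<^sup>2 * norm (q - r)"
      using \<open>s\<^sup>2 = K * \<alpha>\<close> by simp
    also have "\<dots> \<le> sin (20 * s) * norm (q - r)"
      using square_le_sin_20[OF \<open>0 \<le> s\<close>] True by (intro mult_right_mono) auto
    finally show ?thesis
      using plane_angle_diff_le[OF \<open>affine L\<close> \<open>L \<noteq> {}\<close> flat[OF q] ratio[OF q] flat[OF r] ratio[OF r]]
        \<open>0 \<le> \<alpha>\<close> \<open>0 \<le> s\<close> True by simp
  next
    case False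
    then show ?thesis
      using plane_angle_le_pi2[OF \<open>L \<noteq> {}\<close>, of "q - r"] \<open>0 \<le> s\<close> by (auto simp: plane_angle_def)
  qed
  then show "flat_at S q j (20 * sqrt (K * \<alpha>))"
    using L by (auto simp: flat_at_def s_def)
qed

end
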